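(* Both $IIS$ and head spine $SII$ absorb call-by-name $III$: for every term $M$, $IIS(III(M)) = IIS(M)$ and $SII(III(M))=SII(M)$ (equality of partial functions: either both sides are undefined or both are defined and equal).
   Context: Terms: $\Lambda ::= x\mid\lambda x.\Lambda\mid\Lambda\Lambda$; $[N/x]B$ is capture-avoiding substitution. An evaluator is a partial function $\Lambda\rightharpoonup\Lambda$ defined by inference rules, undefined (divergent) where no finite derivation exists; $\mathrm{id}$ is the identity; composition $e_2\circ e_1$ is undefined where $e_1$ is. Eval-apply template: given evaluators $la,op_1,ar_1,op_2,ar_2$ (possibly $ea$ itself), $ea$ is defined by (var) $ea(x)=x$; (abs) $ea(\lambda x.B)=\lambda x.B'$ if $la(B)=B'$; (con) $ea(MN)=B'$ if $op_1(M)=\lambda x.B$, $ar_1(N)=N'$, $ea([N'/x]B)=B'$; (neu) $ea(MN)=M''N'$ if $op_1(M)=M'$, $M'$ not an abstraction, $op_2(M')=M''$, $ar_2(N)=N'$. Uniform evaluator $XYZ\in\{I,S\}^3$: $op_1=ea$, $op_2=\mathrm{id}$, and $la$, $ar_1$, $ar_2$ equal to $ea$ itself when the corresponding letter $X$, $Y$, $Z$ is $S$ and to $\mathrm{id}$ when it is $I$. Thus $III$ is call-by-name and $SII$ is head spine. A strategy $st_2$ absorbs $st_1$ iff $st_2\circ st_1=st_2$. *)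

theory Defs
  imports Main
begin

text \<open>Lambda terms up to alpha-equivalence, represented with de Bruijn indices.\<close>
datatype tm = Var nat | Abs tm | App tm tm

fun lift :: "tm \<Rightarrow> nat \<Rightarrow> tm" where
  "lift (Var i) k = (if i < k then Var i else Var (Suc i))"
| "lift (Abs s) k = Abs (lift s (Suc k))"
| "lift (App s t) k = App (lift s k) (lift t k)"

fun subst :: "tm \<Rightarrow> tm \<Rightarrow> nat \<Rightarrow> tm" where
  "subst (Var i) s k = (if k < i then Var (i - 1) else if i = k then s else Var i)"
| "subst (Abs t) s k = Abs (subst t (lift s 0) (Suc k))"
| "subst (App t u) s k = App (subst t s k) (subst u s k)"

fun is_abs :: "tm \<Rightarrow> bool" where
  "is_abs (Abs _) = True"
| "is_abs _ = False"

text \<open>Uniform eval-apply evaluator XYZ (graph of the partial function).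
  X = True means la = ea (S), False means la = id (I); likewise Y for ar1, Z for ar2.
  op1 = ea, op2 = id.\<close>
inductive ueval :: "bool \<Rightarrow> bool \<Rightarrow> bool \<Rightarrow> tm \<Rightarrow> tm \<Rightarrow> bool"
  for X Y Z :: bool where
  var: "ueval X Y Z (Var x) (Var x)"
| abs_S: "X \<Longrightarrow> ueval X Y Z B B' \<Longrightarrow> ueval X Y Z (Abs B) (Abs B')"
| abs_I: "\<not> X \<Longrightarrow> ueval X Y Z (Abs B) (Abs B)"
| con_S: "Y \<Longrightarrow> ueval X Y Z M (Abs B) \<Longrightarrow> ueval X Y Z N N' \<Longrightarrow>
          ueval X Y Z (subst B N' 0) B' \<Longrightarrow> ueval X Y Z (App M N) B'"
| con_I: "\<not> Y \<Longrightarrow> ueval X Y Z M (Abs B) \<Longrightarrow>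
          ueval X Y Z (subst B N 0) B' \<Longrightarrow> ueval X Y Z (App M N) B'"
| neu_S: "Z \<Longrightarrow> ueval X Y Z M M' \<Longrightarrow> \<not> is_abs M' \<Longrightarrow> ueval X Y Z N N' \<Longrightarrow>
          ueval X Y Z (App M N) (App M' N')"
| neu_I: "\<not> Z \<Longrightarrow> ueval X Y Z M M' \<Longrightarrow> \<not> is_abs M' \<Longrightarrow>
          ueval X Y Z (App M N) (App M' N)"

abbreviation III where "III \<equiv> ueval False False False"
abbreviation IIS where "IIS \<equiv> ueval False False True"
abbreviation SII where "SII \<equiv> ueval True False False"

definition rcomp :: "('a \<Rightarrow> 'b \<Rightarrow> bool) \<Rightarrow> ('c \<Rightarrow> 'a \<Rightarrow> bool) \<Rightarrow> 'c \<Rightarrow> 'b \<Rightarrow> bool" where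
  "rcomp e2 e1 M N \<longleftrightarrow> (\<exists>M'. e1 M M' \<and> e2 M' N)"

definition absorbs :: "(tm \<Rightarrow> tm \<Rightarrow> bool) \<Rightarrow> (tm \<Rightarrow> tm \<Rightarrow> bool) \<Rightarrow> bool" where
  "absorbs st2 st1 \<longleftrightarrow> rcomp st2 st1 = st2"

end

theory Submission
  imports Defs
begin

text \<open>For IIS, the rules for abstractions and for the operator of an application coincide
  with those of III, and IIS maps neutral terms (variables applied to arguments) to neutral
  terms; so an IIS evaluation factors through the III value of the term, by induction on
  either derivation.

  For head spine SII we pass to spine reduction, i.e. \<open>\<beta>\<close> at the head of the
  application spine and under abstractions. SII computes the spine normal form, and
  III computes a spine reduct. Spine reduction has the one-step diamond property, hence all
  reductions to a normal form have the same length; induction on that length shows that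
  SII (and III) is defined on every spine-normalizing term. So both SII (III M) and SII M are
  the spine normal form of M.\<close>

lemma absorbsI:
  assumes "\<And>M V R. st1 M V \<Longrightarrow> st2 V R \<Longrightarrow> st2 M R"
    and "\<And>M R. st2 M R \<Longrightarrow> \<exists>V. st1 M V \<and> st2 V R"
  shows "absorbs st2 st1"
  unfolding absorbs_def rcomp_def using assms by (intro ext) blast

definition normal :: "('a \<Rightarrow> 'a \<Rightarrow> bool) \<Rightarrow> 'a \<Rightarrow> bool" where
  "normal r a \<longleftrightarrow> (\<nexists>b. r a b)"

definition diamondp :: "('a \<Rightarrow> 'a \<Rightarrow> bool) \<Rightarrow> bool" where
  "diamondp r \<longleftrightarrow> (\<forall>a b c. r a b \<longrightarrow> r a c \<longrightarrow> b = c \<or> (\<exists>d. r b d \<and> r c d))"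

lemma relpowp_from_normal: "(r ^^ n) a b \<Longrightarrow> normal r a \<Longrightarrow> n = 0 \<and> b = a"
  by (cases n) (auto simp: normal_def simp del: relpowp.simps(2) dest: relpowp_Suc_D2)

lemma diamondp_relpowp_normal_step:
  assumes "diamondp r" "(r ^^ n) a z" "normal r z" "r a b"
  shows "0 < n \<and> (r ^^ (n - 1)) b z"
  using assms(2-4)
proof (induction n arbitrary: a b)
  case 0
  then show ?case by (auto simp: normal_def)
next
  case (Suc n)
  obtain c where c: "r a c" "(r ^^ n) c z"
    using relpowp_Suc_D2[OF Suc.prems(1)] by blast
  from assms(1) Suc.prems(3) c(1) consider "b = c" | d where "r b d" "r c d"
    unfolding diamondp_def by blast
  then show ?case
  proof cases
    case 1
    then show ?thesis using c by simp
  next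
    case (2 d)
    with Suc.IH[OF c(2) Suc.prems(2)] have "(r ^^ Suc (n - 1)) b z"
      by (blast intro: relpowp_Suc_I2)
    with Suc.IH[OF c(2) Suc.prems(2) 2(2)] show ?thesis by simp
  qed
qed

lemma diamondp_relpowp_normal:
  assumes "diamondp r" "(r ^^ n) a z" "normal r z" "(r ^^ k) a b"
  shows "k \<le> n \<and> (r ^^ (n - k)) b z"
  using assms(4)
proof (induction k arbitrary: b)
  case (Suc k)
  then obtain c where "(r ^^ k) a c" "r c b" by auto
  with Suc.IH diamondp_relpowp_normal_step[OF assms(1) _ assms(3)] show ?case
    by (metis Suc_diff_Suc Suc_leI diff_Suc_1 zero_less_diff)
qed (use assms in simp)

lemma lift_lift: "i \<le> k \<Longrightarrow> lift (lift t i) (Suc k) = lift (lift t k) i"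
  by (induct t arbitrary: i k) auto

lemma lift_subst:
  "i \<le> j \<Longrightarrow> lift (subst t s j) i = subst (lift t i) (lift s i) (Suc j)"
  by (induct t arbitrary: i j s) (auto simp: lift_lift)

lemma subst_lift [simp]: "subst (lift t k) s k = t"
  by (induct t arbitrary: k s) auto

lemma subst_subst:
  "i \<le> j \<Longrightarrow> subst (subst t (lift v i) (Suc j)) (subst u v j) i = subst (subst t u i) v j"
  by (induct t arbitrary: i j u v) (auto simp: lift_lift [symmetric] lift_subst)

inductive neutral :: "tm \<Rightarrow> bool" where
  "neutral (Var x)"
| "neutral M \<Longrightarrow> neutral (App M N)"

lemma neutral_not_abs: "neutral M \<Longrightarrow> \<not> is_abs M"
  by (induction rule: neutral.induct) auto

lemma III_neutral: "III M V \<Longrightarrow> \<not> is_abs V \<Longrightarrow> neutral V"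
  by (induction rule: ueval.induct) (auto intro: neutral.intros)

lemma IIS_neutral: "IIS M R \<Longrightarrow> neutral M \<Longrightarrow> neutral R"
  by (induction rule: ueval.induct) (auto elim: neutral.cases intro: neutral.intros)

lemma IIS_Abs: "IIS (Abs B) R \<Longrightarrow> R = Abs B"
  by (auto elim: ueval.cases)

lemma IIS_abs_after_III: "W = V" if "III M V" "IIS V W" "is_abs W"
proof (cases "is_abs V")
  case False
  then have "neutral W" using III_neutral IIS_neutral that(1,2) by blast
  then show ?thesis using neutral_not_abs that(3) by blast
qed (use that(2) in \<open>auto elim: is_abs.elims dest: IIS_Abs\<close>)

lemma IIS_after_III: "III M V \<Longrightarrow> IIS V R \<Longrightarrow> IIS M R"
proof (induction M V arbitrary: R rule: ueval.induct)
  case (con_I M B N B')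
  then show ?case by (auto intro: ueval.con_I ueval.abs_I)
next
  case (neu_I M M' N)
  from neu_I.prems show ?case
  proof (cases rule: ueval.cases)
    case (con_I B)
    then show ?thesis using IIS_abs_after_III neu_I.hyps by fastforce
  next
    case (neu_S M'' N')
    then show ?thesis using neu_I by (auto intro: ueval.neu_S)
  qed auto
qed auto

lemma IIS_through_III: "IIS M R \<Longrightarrow> \<exists>V. III M V \<and> IIS V R"
proof (induction rule: ueval.induct)
  case (con_I M B N B')
  then obtain V where "III M V" "IIS V (Abs B)" by blast
  with con_I show ?case by (metis IIS_abs_after_III is_abs.simps(1) ueval.con_I)
next
  case (neu_S M M' N N')
  then obtain V where V: "III M V" "IIS V M'" by blast
  with neu_S.hyps have "\<not> is_abs V" by (metis IIS_Abs is_abs.elims(2))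
  with V neu_S show ?case by (blast intro: ueval.neu_I ueval.neu_S)
qed (auto intro: ueval.intros)

inductive spine_step :: "tm \<Rightarrow> tm \<Rightarrow> bool" where
  beta: "spine_step (App (Abs B) N) (subst B N 0)"
| app: "spine_step M M' \<Longrightarrow> spine_step (App M N) (App M' N)"
| abs: "spine_step B B' \<Longrightarrow> spine_step (Abs B) (Abs B')"

inductive_cases spine_step_VarE [elim!]: "spine_step (Var x) R"
inductive_cases spine_step_AbsE [elim!]: "spine_step (Abs B) R"
inductive_cases spine_step_AppE: "spine_step (App M N) R"

lemma spine_step_subst: "spine_step B B' \<Longrightarrow> spine_step (subst B N k) (subst B' N k)"
proof (induction B B' arbitrary: N k rule: spine_step.induct)
  case (beta B P)
  have "spine_step (subst (App (Abs B) P) N k) (subst (subst B (lift N 0) (Suc k)) (subst P N k) 0)"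
    by (simp add: spine_step.beta)
  then show ?case by (simp add: subst_subst)
qed (auto intro: spine_step.intros)

lemma diamondp_spine_step: "diamondp spine_step"
  unfolding diamondp_def
proof (intro allI impI)
  fix M M1 M2
  assume "spine_step M M1" "spine_step M M2"
  then show "M1 = M2 \<or> (\<exists>P. spine_step M1 P \<and> spine_step M2 P)"
  proof (induction M M1 arbitrary: M2 rule: spine_step.induct)
    case (beta B N)
    then show ?case
      by (auto elim!: spine_step_AppE intro: spine_step.beta spine_step_subst)
  next
    case (app M M' N)
    from app.prems consider (beta) B where "M = Abs B" "M2 = subst B N 0"
      | (app) M'' where "spine_step M M''" "M2 = App M'' N"
      by (cases rule: spine_step_AppE) auto
    then show ?case
    proof cases
      case (beta B)
      with app.hyps obtain B' where "M' = Abs B'" "spine_step B B'" by blast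
      with beta show ?thesis by (auto intro: spine_step.beta spine_step_subst)
    next
      case (app M'')
      with app.IH show ?thesis by (auto intro: spine_step.app)
    qed
  next
    case (abs B B')
    then show ?case by (auto intro: spine_step.abs)
  qed
qed

lemma relpowp_spine_step_App: "(spine_step ^^ n) M M' \<Longrightarrow> (spine_step ^^ n) (App M N) (App M' N)"
  by (induction n arbitrary: M') (auto intro: spine_step.app)

lemma relpowp_spine_step_AbsE:
  "(spine_step ^^ n) (Abs B) R \<Longrightarrow> \<exists>R'. R = Abs R' \<and> (spine_step ^^ n) B R'"
proof (induction n arbitrary: R)
  case (Suc n)
  then obtain Y where "(spine_step ^^ n) (Abs B) Y" "spine_step Y R" by auto
  with Suc.IH show ?case by (blast intro: relpowp_Suc_I)
qed simp

lemma rtranclp_spine_step_App: "spine_step\<^sup>*\<^sup>* M M' \<Longrightarrow> spine_step\<^sup>*\<^sup>* (App M N) (App M' N)"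
  by (induction rule: rtranclp_induct) (auto intro: spine_step.app rtranclp.rtrancl_into_rtrancl)

lemma rtranclp_spine_step_Abs: "spine_step\<^sup>*\<^sup>* B B' \<Longrightarrow> spine_step\<^sup>*\<^sup>* (Abs B) (Abs B')"
  by (induction rule: rtranclp_induct) (auto intro: spine_step.abs rtranclp.rtrancl_into_rtrancl)

lemma normal_spine_step_Var: "normal spine_step (Var x)"
  by (auto simp: normal_def)

lemma normal_spine_step_Abs: "normal spine_step (Abs B) \<longleftrightarrow> normal spine_step B"
  by (auto simp: normal_def intro: spine_step.abs)

lemma normal_spine_step_App:
  "normal spine_step M \<Longrightarrow> \<not> is_abs M \<Longrightarrow> normal spine_step (App M N)"
  unfolding normal_def by (auto elim: spine_step_AppE)

lemma normal_spine_step_AppD: "normal spine_step (App M N) \<Longrightarrow> normal spine_step M"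
  by (auto simp: normal_def intro: spine_step.app)

lemma ueval_rtranclp_spine_step: "ueval X False False M V \<Longrightarrow> spine_step\<^sup>*\<^sup>* M V"
proof (induction rule: ueval.induct)
  case (con_I M B N B')
  then have "spine_step\<^sup>*\<^sup>* (App M N) (subst B N 0)"
    by (blast intro: rtranclp_spine_step_App rtranclp.rtrancl_into_rtrancl spine_step.beta)
  with con_I.IH show ?case by simp
qed (auto intro: rtranclp_spine_step_App rtranclp_spine_step_Abs)

lemma SII_normal: "SII M R \<Longrightarrow> normal spine_step R"
  by (induction rule: ueval.induct)
    (auto simp: normal_spine_step_Var normal_spine_step_Abs intro: normal_spine_step_App)

lemma relpowp_spine_step_App_normal_head:
  "(spine_step ^^ n) (App M N) R \<Longrightarrow> normal spine_step R \<Longrightarrow>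
    \<exists>m Q. m \<le> n \<and> (spine_step ^^ m) M Q \<and> normal spine_step Q"
proof (induction n arbitrary: M)
  case 0
  then show ?case by (auto dest: normal_spine_step_AppD)
next
  case (Suc n)
  show ?case
  proof (cases "normal spine_step M")
    case False
    then obtain M1 where M1: "spine_step M M1" by (auto simp: normal_def)
    with Suc.prems have "(spine_step ^^ n) (App M1 N) R"
      using diamondp_relpowp_normal_step[OF diamondp_spine_step] spine_step.app by fastforce
    with Suc.IH Suc.prems(2) obtain m Q where "m \<le> n" "(spine_step ^^ m) M1 Q" "normal spine_step Q"
      by blast
    with M1 show ?thesis by (intro exI[of _ "Suc m"]) (auto simp del: relpowp.simps(2) intro: relpowp_Suc_I2)
  qed (intro exI[of _ 0]; simp)
qed

text \<open>The induction is on the length of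
  the normalizing reduction, then on the term: the head of an application normalizes in at
  most as many steps, and after contracting the head redex strictly fewer steps remain.\<close>
lemma spine_normalizing_ueval:
  assumes "(spine_step ^^ n) M R" "normal spine_step R"
  shows "\<exists>V. ueval X False False M V \<and> (X \<longrightarrow> V = R)"
  using assms
proof (induction n arbitrary: M R rule: less_induct)
  case (less n M R)
  from less.prems show ?case
  proof (induction M arbitrary: R)
    case (Var x)
    then have "R = Var x" using relpowp_from_normal[OF _ normal_spine_step_Var] by blast
    then show ?case using ueval.var by blast
  next
    case (Abs B)
    then obtain R' where "R = Abs R'" "(spine_step ^^ n) B R'"
      using relpowp_spine_step_AbsE by blast
    with Abs show ?case
      by (cases X) (auto simp: normal_spine_step_Abs intro: ueval.abs_S ueval.abs_I)
  next
    case (App M N)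
    obtain m Q where mQ: "m \<le> n" "(spine_step ^^ m) M Q" "normal spine_step Q"
      using relpowp_spine_step_App_normal_head[OF App.prems] by blast
    have "\<exists>V. ueval X False False M V \<and> (X \<longrightarrow> V = Q)"
    proof (cases "m < n")
      case True
      then show ?thesis using less.IH mQ(2,3) by blast
    next
      case False
      then show ?thesis using App.IH(1) mQ by (simp add: le_less)
    qed
    then obtain V where V: "ueval X False False M V" "X \<longrightarrow> V = Q" by blast
    obtain k where k: "(spine_step ^^ k) M V"
      using ueval_rtranclp_spine_step[OF V(1)] by (auto simp: rtranclp_power)
    show ?case
    proof (cases "is_abs V")
      case True
      then obtain D where D: "V = Abs D" by (cases V) auto
      have "(spine_step ^^ Suc k) (App M N) (subst D N 0)"
        using relpowp_Suc_I[OF relpowp_spine_step_App[OF k[unfolded D]] spine_step.beta] .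
      then have "Suc k \<le> n" "(spine_step ^^ (n - Suc k)) (subst D N 0) R"
        using diamondp_relpowp_normal[OF diamondp_spine_step App.prems] by blast+
      moreover have "n - Suc k < n" using \<open>Suc k \<le> n\<close> by simp
      ultimately obtain W where "ueval X False False (subst D N 0) W" "X \<longrightarrow> W = R"
        using less.IH App.prems(2) by blast
      with V(1) D show ?thesis by (blast intro: ueval.con_I)
    next
      case False
      have "X \<longrightarrow> App V N = R"
      proof
        assume X
        with V(2) have "V = Q" by blast
        with mQ False have "normal spine_step (App V N)" "(spine_step ^^ (n - m)) (App V N) R"
          using normal_spine_step_App
            diamondp_relpowp_normal[OF diamondp_spine_step App.prems relpowp_spine_step_App]
          by blast+
        then show "App V N = R" using relpowp_from_normal by metis
      qed
      with V(1) False show ?thesis by (blast intro: ueval.neu_I)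
    qed
  qed
qed

lemma SII_after_III: "III M V \<Longrightarrow> SII V R \<Longrightarrow> SII M R"
proof -
  assume "III M V" "SII V R"
  then have "spine_step\<^sup>*\<^sup>* M R" "normal spine_step R"
    using ueval_rtranclp_spine_step[of False M V] ueval_rtranclp_spine_step[of True V R]
      SII_normal by auto
  then show "SII M R"
    using spine_normalizing_ueval[where X = True] by (auto simp: rtranclp_power)
qed

lemma SII_through_III: "SII M R \<Longrightarrow> \<exists>V. III M V \<and> SII V R"
proof -
  assume "SII M R"
  then obtain n where n: "(spine_step ^^ n) M R" and R: "normal spine_step R"
    using ueval_rtranclp_spine_step[of True M R] SII_normal[of M R] by (auto simp: rtranclp_power)
  then obtain V where V: "III M V"
    using spine_normalizing_ueval[where X = False] by blast
  then obtain k where "(spine_step ^^ k) M V"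
    using ueval_rtranclp_spine_step[of False M V] by (auto simp: rtranclp_power)
  then have "(spine_step ^^ (n - k)) V R"
    using diamondp_relpowp_normal[OF diamondp_spine_step n R] by blast
  with V R show ?thesis using spine_normalizing_ueval[where X = True] by blast
qed

theorem mainTheorem3:
  shows "absorbs IIS III \<and> absorbs SII III"
  by (blast intro: absorbsI IIS_after_III IIS_through_III SII_after_III SII_through_III)

end
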